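(* Let $\mathbb{K}$ be a field and $f=a_0(x)+a_1(x)y+\cdots+a_n(x)y^n\in\mathbb{K}[x,y]$ with $n\geq 2$, $a_0,\ldots,a_n\in\mathbb{K}[x]$, $a_0a_n\neq 0$. Assume that $f$ has no nonconstant factor in $\mathbb{K}[x]$, and let $\nu_0$ and $\nu_n$ be the number of irreducible factors of $a_0(x)$ and $a_n(x)$ in $\mathbb{K}[x]$, respectively, counted with their multiplicities. (i) If $\deg a_0>\max\{\deg a_1,\dots,\deg a_n\}$, then $f$ is a product of at most $\nu_0$ irreducible polynomials over $\mathbb{K}[x]$. (ii) If $\deg a_n>\max\{\deg a_0,\dots,\deg a_{n-1}\}$, then $f$ is a product of at most $\nu_n$ irreducible polynomials over $\mathbb{K}[x]$.
   Context: $f$ is regarded as a polynomial in $y$ with coefficients in $\mathbb{K}[x]$; "a product of at most $k$ irreducible polynomials over $\mathbb{K}[x]$" means that in the factorization of $f$ into irreducible elements of $\mathbb{K}[x][y]$ the number of factors, counted with multiplicities, is at most $k$. *)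

theory Defs
  imports "HOL-Computational_Algebra.Computational_Algebra"
begin

text \<open>A bivariate polynomial f in K[x,y] is represented as a polynomial in y with
coefficients in K[x], i.e. of type 'a poly poly; coeff f i is a_i(x).\<close>

end

theory Submission
  imports Defs
begin

text \<open>View f as a polynomial in x and y and look at the monomials of maximal x-degree.
  For a product g h, the largest (resp. smallest) y-index among them is the sum of those of g
  and h, since the corresponding product of leading terms cannot cancel. Under hypothesis (i)
  the maximal x-degree of f is attained at the single index 0, hence the same holds for every
  factor g of f; if g is irreducible, its constant coefficient a_0(g) must then be a
  nonconstant polynomial in x. As a_0 is multiplicative, a factorization of f into k
  irreducibles splits a_0(f) into k nonconstant factors, so k is at most the number of prime
  factors of a_0(f). Part (ii) is the same argument at the index degree f, using a_n instead.\<close>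

lemma irreducible_factorization_exists:
  fixes f :: "'a::factorial_semiring"
  assumes "f \<noteq> 0" "\<not> is_unit f"
  obtains fs where "\<forall>g\<in>#fs. irreducible g" "f = prod_mset fs"
proof -
  obtain A where A: "\<And>x. x \<in># A \<Longrightarrow> prime_elem x" "normalize (prod_mset A) = normalize f"
    using prime_factorization_exists[OF assms(1)] by blast
  obtain u where u: "is_unit u" "f = u * prod_mset A"
    using associatedE2[OF A(2)] by blast
  have "A \<noteq> {#}" using u assms(2) by auto
  then obtain a where a: "a \<in># A" by blast
  define fs where "fs = add_mset (u * a) (A - {#a#})"
  have "prod_mset fs = f"
    using a u(2) unfolding fs_def by (simp add: prod_mset.remove[OF a] mult.assoc)
  moreover have "\<forall>g\<in>#fs. irreducible g"
    unfolding fs_def using A(1) a u(1)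
    by (auto simp: irreducible_mult_unit_left prime_elem_imp_irreducible dest: in_diffD)
  ultimately show ?thesis using that by metis
qed

lemma size_le_size_prime_factorization_prod_mset:
  fixes xs :: "'a::factorial_semiring multiset"
  assumes "\<forall>x\<in>#xs. x \<noteq> 0 \<and> \<not> is_unit x"
  shows "size xs \<le> size (prime_factorization (prod_mset xs))"
  using assms
proof (induction xs)
  case (add x xs)
  then have "prime_factorization x \<noteq> {#}" "prod_mset xs \<noteq> 0"
    by (auto simp: prime_factorization_empty_iff)
  with add show ?case
    by (simp add: prime_factorization_mult Suc_leI nonempty_has_size)
qed simp

lemma coeff_0_prod_mset: "coeff (prod_mset fs) 0 = prod_mset (image_mset (\<lambda>g. coeff g 0) fs)"
  by (induction fs) (auto simp: coeff_mult_0)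

lemma lead_coeff_prod_mset:
  fixes fs :: "'a::idom poly multiset"
  shows "lead_coeff (prod_mset fs) = prod_mset (image_mset lead_coeff fs)"
  by (induction fs) (auto simp: lead_coeff_mult)

definition max_coeff_degree :: "'a::zero poly poly \<Rightarrow> nat" where
  "max_coeff_degree g = Max ((\<lambda>i. degree (coeff g i)) ` {..degree g})"

definition top_coeff_indices :: "'a::zero poly poly \<Rightarrow> nat set" where
  "top_coeff_indices g = {i. coeff g i \<noteq> 0 \<and> degree (coeff g i) = max_coeff_degree g}"

definition dominant_coeff :: "'a::zero poly poly \<Rightarrow> nat \<Rightarrow> bool" where
  "dominant_coeff g k \<longleftrightarrow> coeff g k \<noteq> 0 \<and>
     (\<forall>i. i \<noteq> k \<longrightarrow> coeff g i \<noteq> 0 \<longrightarrow> degree (coeff g i) < degree (coeff g k))"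

lemma degree_coeff_le_max_coeff_degree: "degree (coeff g i) \<le> max_coeff_degree g"
proof (cases "i \<le> degree g")
  case True then show ?thesis unfolding max_coeff_degree_def by (intro Max_ge) auto
qed (simp add: coeff_eq_0)

lemma finite_top_coeff_indices: "finite (top_coeff_indices g)"
  by (rule finite_subset[of _ "{..degree g}"]) (auto simp: top_coeff_indices_def le_degree)

lemma top_coeff_indices_nonempty:
  assumes "g \<noteq> 0" shows "top_coeff_indices g \<noteq> {}"
proof -
  obtain i where i: "degree (coeff g i) = max_coeff_degree g"
    unfolding max_coeff_degree_def using Max_in[of "(\<lambda>i. degree (coeff g i)) ` {..degree g}"]
    by fastforce
  show ?thesis
  proof (cases "coeff g i = 0")
    case True
    then have "max_coeff_degree g = 0" using i by simp
    then have "degree g \<in> top_coeff_indices g"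
      using assms degree_coeff_le_max_coeff_degree[of g "degree g"]
      unfolding top_coeff_indices_def by auto
    then show ?thesis by auto
  qed (use i in \<open>auto simp: top_coeff_indices_def\<close>)
qed

lemma dominant_coeffI:
  assumes "top_coeff_indices g = {k}" shows "dominant_coeff g k"
proof -
  have k: "coeff g k \<noteq> 0" "degree (coeff g k) = max_coeff_degree g"
    using assms unfolding top_coeff_indices_def by auto
  have "degree (coeff g i) < degree (coeff g k)" if "i \<noteq> k" "coeff g i \<noteq> 0" for i
  proof -
    have "i \<notin> top_coeff_indices g" using assms that(1) by auto
    with that(2) k(2) degree_coeff_le_max_coeff_degree[of g i] show ?thesis
      unfolding top_coeff_indices_def by auto
  qed
  with k(1) show ?thesis unfolding dominant_coeff_def by blast
qed

lemma degree_coeff_mult_le: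
  fixes g h :: "'a::idom poly poly"
  shows "degree (coeff (g * h) n) \<le> max_coeff_degree g + max_coeff_degree h"
  unfolding coeff_mult
  by (intro degree_sum_le finite_atMost ballI order.trans[OF degree_mult_le] add_mono
      degree_coeff_le_max_coeff_degree)

lemma coeff_coeff_mult_top_coeff_indices:
  fixes g h :: "'a::idom poly poly"
  assumes i: "i \<in> top_coeff_indices g" and j: "j \<in> top_coeff_indices h"
    and unique: "\<And>i' j'. i' + j' = i + j \<Longrightarrow> i' \<in> top_coeff_indices g \<Longrightarrow>
                   j' \<in> top_coeff_indices h \<Longrightarrow> i' = i"
  shows "coeff (coeff (g * h) (i + j)) (max_coeff_degree g + max_coeff_degree h) \<noteq> 0"
proof -
  let ?M = "max_coeff_degree g + max_coeff_degree h"
  have vanish: "coeff (coeff g i' * coeff h (i + j - i')) ?M = 0"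
    if "i' \<le> i + j" "i' \<noteq> i" for i'
  proof -
    have "i' \<notin> top_coeff_indices g \<or> i + j - i' \<notin> top_coeff_indices h"
      using unique[of i' "i + j - i'"] that by auto
    then have "degree (coeff g i' * coeff h (i + j - i')) < ?M \<or>
               coeff g i' * coeff h (i + j - i') = 0"
      using degree_mult_le[of "coeff g i'" "coeff h (i + j - i')"]
        degree_coeff_le_max_coeff_degree[of g i'] degree_coeff_le_max_coeff_degree[of h "i + j - i'"]
      unfolding top_coeff_indices_def by fastforce
    then show ?thesis by (auto simp: coeff_eq_0)
  qed
  have "coeff (g * h) (i + j) = (\<Sum>i'\<le>i + j. coeff g i' * coeff h (i + j - i'))"
    by (rule coeff_mult)
  then have "coeff (coeff (g * h) (i + j)) ?M = coeff (coeff g i * coeff h j) ?M"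
    by (simp add: coeff_sum sum.remove[of _ i] sum.neutral vanish)
  also have "\<dots> = lead_coeff (coeff g i) * lead_coeff (coeff h j)"
    using i j coeff_mult_degree_sum[of "coeff g i" "coeff h j"]
    unfolding top_coeff_indices_def by simp
  also have "\<dots> \<noteq> 0"
    using i j by (intro no_zero_divisors leading_coeff_neq_0) (auto simp: top_coeff_indices_def)
  finally show ?thesis .
qed

lemma Min_eq_Max_imp_singleton:
  fixes T :: "'a::linorder set"
  assumes T: "finite T" "T \<noteq> {}" and "Min T = Max T"
  shows "T = {Max T}"
proof -
  have "x = Max T" if "x \<in> T" for x
    using Min_le[OF T(1) that] Max_ge[OF T(1) that] \<open>Min T = Max T\<close> by simp
  with Max_in[OF T] show ?thesis by blast
qed

lemma dominant_coeff_mult: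
  fixes g h :: "'a::idom poly poly"
  assumes "dominant_coeff (g * h) k"
  obtains i j where "dominant_coeff g i" "dominant_coeff h j" "k = i + j"
proof -
  let ?Tg = "top_coeff_indices g" and ?Th = "top_coeff_indices h"
  let ?M = "max_coeff_degree g + max_coeff_degree h"
  have "g \<noteq> 0" "h \<noteq> 0" using assms unfolding dominant_coeff_def by auto
  then have ne: "?Tg \<noteq> {}" "?Th \<noteq> {}" by (simp_all add: top_coeff_indices_nonempty)
  note fin = finite_top_coeff_indices
  have at_k: "n = k" if "coeff (coeff (g * h) n) ?M \<noteq> 0" for n
  proof (rule ccontr)
    assume "n \<noteq> k"
    moreover have "coeff (g * h) n \<noteq> 0" "?M \<le> degree (coeff (g * h) n)"
      using that le_degree by auto
    ultimately show False
      using assms degree_coeff_mult_le[of g h k] unfolding dominant_coeff_def by fastforce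
  qed
  have "Max ?Tg + Max ?Th = k"
  proof (intro at_k coeff_coeff_mult_top_coeff_indices)
    show "Max ?Tg \<in> ?Tg" "Max ?Th \<in> ?Th" using Max_in[OF fin] ne by blast+
    fix i' j' assume "i' + j' = Max ?Tg + Max ?Th" "i' \<in> ?Tg" "j' \<in> ?Th"
    moreover from this(2,3) have "i' \<le> Max ?Tg" "j' \<le> Max ?Th" by (simp_all add: fin)
    ultimately show "i' = Max ?Tg" by linarith
  qed
  moreover have "Min ?Tg + Min ?Th = k"
  proof (intro at_k coeff_coeff_mult_top_coeff_indices)
    show "Min ?Tg \<in> ?Tg" "Min ?Th \<in> ?Th" using Min_in[OF fin] ne by blast+
    fix i' j' assume "i' + j' = Min ?Tg + Min ?Th" "i' \<in> ?Tg" "j' \<in> ?Th"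
    moreover from this(2,3) have "Min ?Tg \<le> i'" "Min ?Th \<le> j'" by (simp_all add: fin)
    ultimately show "i' = Min ?Tg" by linarith
  qed
  moreover have "Min ?Tg \<le> Max ?Tg" "Min ?Th \<le> Max ?Th"
    using ne by (meson fin Max_in Min_le)+
  ultimately have min_max: "Min ?Tg = Max ?Tg" "Min ?Th = Max ?Th" by linarith+
  have "?Tg = {Max ?Tg}" "?Th = {Max ?Th}"
    using Min_eq_Max_imp_singleton[OF fin ne(1) min_max(1)]
      Min_eq_Max_imp_singleton[OF fin ne(2) min_max(2)] .
  with \<open>Max ?Tg + Max ?Th = k\<close> show ?thesis
    using that dominant_coeffI by metis
qed

lemma dominant_coeff_0_dvd:
  fixes f g :: "'a::idom poly poly"
  assumes "dominant_coeff f 0" "g dvd f"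
  shows "dominant_coeff g 0"
proof -
  from \<open>g dvd f\<close> obtain h where "f = g * h" by (elim dvdE)
  with assms(1) obtain i j where "dominant_coeff g i" "0 = i + j"
    using dominant_coeff_mult by metis
  then show ?thesis by simp
qed

lemma dominant_coeff_degree_dvd:
  fixes f g :: "'a::idom poly poly"
  assumes "dominant_coeff f (degree f)" "g dvd f"
  shows "dominant_coeff g (degree g)"
proof -
  from \<open>g dvd f\<close> obtain h where f: "f = g * h" by (elim dvdE)
  with assms(1) obtain i j where ij: "dominant_coeff g i" "dominant_coeff h j" "degree f = i + j"
    using dominant_coeff_mult by metis
  then have "g \<noteq> 0" "h \<noteq> 0" "i \<le> degree g" "j \<le> degree h"
    unfolding dominant_coeff_def by (auto intro: le_degree)
  moreover have "degree f = degree g + degree h"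
    using f \<open>g \<noteq> 0\<close> \<open>h \<noteq> 0\<close> by (simp add: degree_mult_eq)
  ultimately have "i = degree g" using ij(3) by linarith
  with ij(1) show ?thesis by simp
qed

text \<open>The hypothesis on a_0 excludes irreducibles such as y, whose dominant coefficient is constant.\<close>

lemma irreducible_dominant_coeff_degree_pos:
  fixes g :: "'a::field poly poly"
  assumes "irreducible g" "coeff g 0 \<noteq> 0" "dominant_coeff g k"
  shows "0 < degree (coeff g k)"
proof (rule ccontr)
  assume "\<not> 0 < degree (coeff g k)"
  then have only_k: "coeff g i = 0" if "i \<noteq> k" for i
    using assms(3) that unfolding dominant_coeff_def by auto
  then have "k = 0" using only_k[of 0] assms(2) by blast
  then have "g = [:coeff g 0:]"
    using only_k by (metis coeff_pCons_0 degree_0_id leading_coeff_0_iff pCons_0_0)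
  moreover have "is_unit (coeff g 0)"
    using assms(2) \<open>\<not> 0 < degree (coeff g k)\<close> \<open>k = 0\<close> by (simp add: is_unit_iff_degree)
  ultimately have "is_unit g" by (metis is_unit_const_poly_iff)
  with assms(1) show False by (simp add: irreducible_not_unit)
qed

lemma irreducible_factorization_size_le_coeff_0:
  fixes fs :: "'a::field_gcd poly poly multiset"
  assumes irr: "\<forall>g\<in>#fs. irreducible g" and dom: "dominant_coeff (prod_mset fs) 0"
  shows "size fs \<le> size (prime_factorization (coeff (prod_mset fs) 0))"
proof -
  have "coeff g 0 \<noteq> 0 \<and> \<not> is_unit (coeff g 0)" if "g \<in># fs" for g
  proof -
    have "dominant_coeff g 0"
      using dominant_coeff_0_dvd[OF dom dvd_prod_mset[OF that]] .
    then have "coeff g 0 \<noteq> 0" unfolding dominant_coeff_def by simp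
    with irreducible_dominant_coeff_degree_pos[OF _ _ \<open>dominant_coeff g 0\<close>] irr that
    show ?thesis by (simp add: is_unit_iff_degree)
  qed
  then show ?thesis
    using size_le_size_prime_factorization_prod_mset[of "image_mset (\<lambda>g. coeff g 0) fs"]
    by (simp add: coeff_0_prod_mset)
qed

lemma irreducible_factorization_size_le_lead_coeff:
  fixes fs :: "'a::field_gcd poly poly multiset"
  assumes irr: "\<forall>g\<in>#fs. irreducible g" and a0: "coeff (prod_mset fs) 0 \<noteq> 0"
    and dom: "dominant_coeff (prod_mset fs) (degree (prod_mset fs))"
  shows "size fs \<le> size (prime_factorization (lead_coeff (prod_mset fs)))"
proof -
  have "lead_coeff g \<noteq> 0 \<and> \<not> is_unit (lead_coeff g)" if "g \<in># fs" for g
  proof -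
    have "dominant_coeff g (degree g)"
      using dominant_coeff_degree_dvd[OF dom dvd_prod_mset[OF that]] .
    moreover have "coeff g 0 \<noteq> 0"
      using a0 dvd_prod_mset[OF that] by (auto simp: coeff_mult_0)
    ultimately show ?thesis
      using irreducible_dominant_coeff_degree_pos irr that
      by (metis degree_0 is_unit_iff_degree less_irrefl)
  qed
  then show ?thesis
    using size_le_size_prime_factorization_prod_mset[of "image_mset lead_coeff fs"]
    by (simp add: lead_coeff_prod_mset)
qed

theorem theorem1:
  fixes f :: "'a :: field_gcd poly poly"
  assumes n2: "degree f \<ge> 2"
    and a0an: "coeff f 0 * coeff f (degree f) \<noteq> 0"
    and no_const_factor: "\<forall>c :: 'a poly. [:c:] dvd f \<longrightarrow> degree c = 0"
  shows "((\<forall>i\<in>{1..degree f}. degree (coeff f i) < degree (coeff f 0)) \<longrightarrow>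
           (\<exists>fs :: 'a poly poly multiset. (\<forall>g\<in>#fs. irreducible g) \<and> f = prod_mset fs \<and>
              size fs \<le> size (prime_factorization (coeff f 0))))
       \<and> ((\<forall>i\<in>{0..<degree f}. degree (coeff f i) < degree (coeff f (degree f))) \<longrightarrow>
           (\<exists>fs :: 'a poly poly multiset. (\<forall>g\<in>#fs. irreducible g) \<and> f = prod_mset fs \<and>
              size fs \<le> size (prime_factorization (coeff f (degree f)))))"
proof -
  have "f \<noteq> 0" "\<not> is_unit f" using n2 dvd_imp_degree_le[of f 1] by auto
  then obtain fs where fs: "\<forall>g\<in>#fs. irreducible g" "f = prod_mset fs"
    by (rule irreducible_factorization_exists)
  have a0: "coeff f 0 \<noteq> 0" using a0an by simp
  show ?thesis
  proof (intro conjI impI)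
    assume "\<forall>i\<in>{1..degree f}. degree (coeff f i) < degree (coeff f 0)"
    then have "dominant_coeff f 0"
      using a0 le_degree unfolding dominant_coeff_def by fastforce
    then show "\<exists>fs. (\<forall>g\<in>#fs. irreducible g) \<and> f = prod_mset fs \<and>
                 size fs \<le> size (prime_factorization (coeff f 0))"
      using fs irreducible_factorization_size_le_coeff_0 by blast
  next
    assume "\<forall>i\<in>{0..<degree f}. degree (coeff f i) < degree (coeff f (degree f))"
    then have "dominant_coeff f (degree f)"
      using \<open>f \<noteq> 0\<close> unfolding dominant_coeff_def
      by (auto simp: le_degree order.not_eq_order_implies_strict)
    then show "\<exists>fs. (\<forall>g\<in>#fs. irreducible g) \<and> f = prod_mset fs \<and>
                 size fs \<le> size (prime_factorization (lead_coeff f))"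
      using fs a0 irreducible_factorization_size_le_lead_coeff by blast
  qed
qed

end
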